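(* Let $\Gamma$ be a $\mathbb{Z}^d$-periodic graph with fundamental domain $W$, identified with $[n]$. The generic dispersion polynomial $\Phi(z,\lambda,e,V)=\det M(z,\lambda,e,V)$, where $M(z,\lambda,e,V)=\lambda I_n-H(z,e,V)$, is cancellation-free.
   Context: A $\mathbb{Z}^d$-periodic graph $\Gamma$ is a simple undirected graph with bounded vertex degrees and a free action of $\mathbb{Z}^d$ by automorphisms, $(\alpha,v)\mapsto\alpha+v$, with finitely many orbits of vertices and edges; $W$ contains one vertex from each vertex orbit. The generic Floquet matrix $H(z,e,V)$ is the $W\times W$ matrix with $(v,u)$ entry $\delta_{v,u}V(v)-\sum_{\alpha\in\mathbb{Z}^d:\ v\sim\alpha+u}e_{(v,\alpha+u)}z^\alpha$, where the edge weights $e$ (one indeterminate per $\mathbb{Z}^d$-orbit of edges, $e_{(u,v)}=e_{(v,u)}$) and potentials $V(v)$ (one indeterminate per $v\in W$) are independent indeterminates, and $z^\alpha=z_1^{\alpha_1}\cdots z_d^{\alpha_d}$. For an $n\times n$ matrix $M=(f_{i,j})$ of (Laurent) polynomials, $\det M=\sum_{w\in S_n}\mathrm{sgn}(w)M_w$ with $M_w=f_{1,w(1)}\cdots f_{n,w(n)}$; $\det M$ is cancellation-free if for every $w\in S_n$ with $M_w\neq 0$, every monomial occurring in $M_w$ occurs in $\det M$ (i.e. the support of $M_w$ is contained in the support of $\det M$). Here monomials are in all the variables $z,\lambda,e,V$. *)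

theory Defs
  imports Main "HOL-Library.Poly_Mapping" "HOL-Combinatorics.Permutations"
begin

text \<open>Indeterminates: z_k (k ranging over the finite index type 'd, so d = CARD('d)),
  lambda, one edge weight per Z^d-orbit of (undirected) edges, one potential per vertex of W = [n].
  An edge orbit is represented by the set of its two directed representatives
  starting in the fundamental domain: the edge {(0,i),(alpha,j)} is represented by
  {(i,j,alpha),(j,i,-alpha)}.\<close>
datatype 'd var = Zv 'd | Lam | Ev "(nat \<times> nat \<times> ('d \<Rightarrow> int)) set" | Vv nat

text \<open>Laurent polynomials with integer coefficients in the above indeterminates:
  a monomial is a finitely supported exponent map var => int.\<close>
type_synonym 'd lpoly = "('d var \<Rightarrow>\<^sub>0 int) \<Rightarrow>\<^sub>0 int"

definition pvar :: "'d var \<Rightarrow> 'd lpoly" where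
  "pvar x = Poly_Mapping.single (Poly_Mapping.single x 1) 1"

definition zpow :: "('d::finite \<Rightarrow> int) \<Rightarrow> 'd lpoly" where
  "zpow \<alpha> = Poly_Mapping.single (\<Sum>k\<in>UNIV. Poly_Mapping.single (Zv k) (\<alpha> k)) 1"

definition edge_var :: "nat \<Rightarrow> nat \<Rightarrow> ('d \<Rightarrow> int) \<Rightarrow> 'd var" where
  "edge_var i j \<alpha> = Ev {(i, j, \<alpha>), (j, i, (\<lambda>k. - \<alpha> k))}"

text \<open>A Z^d-periodic graph with fundamental domain W = {0..<n}: vertex set Z^d x W,
  Z^d acting by translation on the first component; simple (symmetric, irreflexive),
  translation invariant, with finitely many edge orbits (equivalently: each vertex of W
  has finitely many neighbours in each orbit).\<close>
definition periodic_graph :: "nat \<Rightarrow> (('d::finite \<Rightarrow> int) \<times> nat \<Rightarrow> ('d \<Rightarrow> int) \<times> nat \<Rightarrow> bool) \<Rightarrow> bool" where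
  "periodic_graph n adj \<longleftrightarrow>
     (\<forall>x y. adj x y \<longrightarrow> adj y x) \<and>
     (\<forall>x. \<not> adj x x) \<and>
     (\<forall>x y. adj x y \<longrightarrow> snd x < n \<and> snd y < n) \<and>
     (\<forall>a b c i j. adj (a, i) (b, j) \<longleftrightarrow> adj (\<lambda>k. a k + c k, i) (\<lambda>k. b k + c k, j)) \<and>
     (\<forall>i j. finite {\<alpha>. adj (\<lambda>_. 0, i) (\<alpha>, j)})"

definition floquet_H :: "(('d::finite \<Rightarrow> int) \<times> nat \<Rightarrow> ('d \<Rightarrow> int) \<times> nat \<Rightarrow> bool) \<Rightarrow> nat \<Rightarrow> nat \<Rightarrow> 'd lpoly" where
  "floquet_H adj i j =
     (if i = j then pvar (Vv i) else 0)
     - (\<Sum>\<alpha>\<in>{\<alpha>. adj (\<lambda>_. 0, i) (\<alpha>, j)}. pvar (edge_var i j \<alpha>) * zpow \<alpha>)"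

definition dispersion_matrix :: "(('d::finite \<Rightarrow> int) \<times> nat \<Rightarrow> ('d \<Rightarrow> int) \<times> nat \<Rightarrow> bool) \<Rightarrow> nat \<Rightarrow> nat \<Rightarrow> 'd lpoly" where
  "dispersion_matrix adj i j = (if i = j then pvar Lam else 0) - floquet_H adj i j"

definition perm_term :: "(nat \<Rightarrow> nat \<Rightarrow> 'a::comm_ring_1) \<Rightarrow> nat \<Rightarrow> (nat \<Rightarrow> nat) \<Rightarrow> 'a" where
  "perm_term M n w = (\<Prod>i<n. M i (w i))"

definition det_leibniz :: "(nat \<Rightarrow> nat \<Rightarrow> 'a::comm_ring_1) \<Rightarrow> nat \<Rightarrow> 'a" where
  "det_leibniz M n = (\<Sum>w | w permutes {..<n}. of_int (sign w) * perm_term M n w)"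

definition cancellation_free :: "(nat \<Rightarrow> nat \<Rightarrow> ('v \<Rightarrow>\<^sub>0 int) \<Rightarrow>\<^sub>0 int) \<Rightarrow> nat \<Rightarrow> bool" where
  "cancellation_free M n \<longleftrightarrow>
     (\<forall>w. w permutes {..<n} \<longrightarrow> perm_term M n w \<noteq> 0 \<longrightarrow>
        Poly_Mapping.keys (perm_term M n w) \<subseteq> Poly_Mapping.keys (det_leibniz M n))"

end

theory Submission
  imports Defs
begin

text \<open>Expanding the Leibniz term \<open>M\<^sub>w\<close> picks in every row \<open>i\<close> one summand of \<open>M(i, w i)\<close>:
  \<open>\<lambda>\<close>, \<open>-V(i)\<close> or \<open>e z\<^sup>\<alpha>\<close>. The resulting monomial remembers which rows picked a potential,
  hence its coefficient \<open>\<plusminus>1\<close>, and through the exponents of the edge variables it remembers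
  how often each pair of distinct vertices of \<open>W\<close> is joined, i.e. the cycles of \<open>w\<close> up to
  orientation. Reversing cycles does not change the sign of a permutation, so every
  occurrence of a monomial in \<open>det M\<close> comes with the same sign and nothing cancels.\<close>

text \<open>The multigraph with an edge \<open>{x, w x}\<close> for every \<open>x\<close> is the union of the cycles of \<open>w\<close>
  with their orientation forgotten.\<close>

definition perm_edge_mult :: "('a \<Rightarrow> 'a) \<Rightarrow> 'a \<Rightarrow> 'a \<Rightarrow> int" where
  "perm_edge_mult w x y = of_bool (w x = y) + of_bool (w y = x)"

definition same_cycle_graph :: "('a \<Rightarrow> 'a) \<Rightarrow> ('a \<Rightarrow> 'a) \<Rightarrow> bool" where
  "same_cycle_graph w v \<longleftrightarrow> (\<forall>x y. x \<noteq> y \<longrightarrow> perm_edge_mult w x y = perm_edge_mult v x y)"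

lemma perm_edge_mult_inv:
  assumes "bij w"
  shows "perm_edge_mult (inv w) x y = perm_edge_mult w x y"
proof -
  have "inv w a = b \<longleftrightarrow> w b = a" for a b
    using bij_inv_eq_iff[OF assms, of b a] by auto
  then show ?thesis
    unfolding perm_edge_mult_def by (simp add: add.commute)
qed

lemma same_cycle_graph_inv:
  assumes "bij v" "same_cycle_graph w v"
  shows "same_cycle_graph w (inv v)"
  using assms by (simp add: same_cycle_graph_def perm_edge_mult_inv)

lemma same_cycle_graph_modify_common:
  assumes "same_cycle_graph w v"
    and "\<And>x. (w x = v x \<and> w' x = v' x) \<or> (w' x = w x \<and> v' x = v x)"
  shows "same_cycle_graph w' v'"
  unfolding same_cycle_graph_def
proof (intro allI impI)
  fix x y :: 'a
  assume "x \<noteq> y"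
  have point: "of_bool (w' a = b) - of_bool (v' a = b) = (of_bool (w a = b) - of_bool (v a = b) :: int)"
    for a b using assms(2)[of a] by (elim disjE conjE) simp_all
  have "perm_edge_mult w' x y - perm_edge_mult v' x y
      = (of_bool (w' x = y) - of_bool (v' x = y)) + (of_bool (w' y = x) - of_bool (v' y = x))"
    unfolding perm_edge_mult_def by linarith
  also have "\<dots> = perm_edge_mult w x y - perm_edge_mult v x y"
    unfolding point perm_edge_mult_def by linarith
  finally have "perm_edge_mult w' x y - perm_edge_mult v' x y = perm_edge_mult w x y - perm_edge_mult v x y" .
  moreover have "perm_edge_mult w x y = perm_edge_mult v x y"
    using assms(1) \<open>x \<noteq> y\<close> unfolding same_cycle_graph_def by blast
  ultimately show "perm_edge_mult w' x y = perm_edge_mult v' x y"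
    by linarith
qed

lemma same_cycle_graph_id:
  assumes "same_cycle_graph id v"
  shows "v = id"
proof (rule ext, rule ccontr)
  fix x
  assume "v x \<noteq> id x"
  then have "perm_edge_mult id x (v x) = perm_edge_mult v x (v x)"
    using assms unfolding same_cycle_graph_def by simp
  moreover have "perm_edge_mult id x (v x) = 0"
    using \<open>v x \<noteq> id x\<close> by (auto simp: perm_edge_mult_def)
  moreover have "perm_edge_mult v x (v x) \<ge> 1"
    by (simp add: perm_edge_mult_def)
  ultimately show False by simp
qed

text \<open>Composing with the transposition of \<open>i\<close> and \<open>j = w i\<close> cuts \<open>i\<close> out of its cycle:
  \<open>k \<mapsto> i \<mapsto> j\<close> becomes \<open>k \<mapsto> j\<close> and \<open>i\<close> becomes a fixed point.\<close>

lemma transpose_apply_cycle: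
  assumes "inj w" "w k = i" "w i = j" "k \<noteq> i"
  shows "transpose i j (w x) = (if x = k then j else if x = i then i else w x)"
proof -
  have "w x = i \<longleftrightarrow> x = k" "w x = j \<longleftrightarrow> x = i"
    using assms(1-3) unfolding inj_def by blast+
  then show ?thesis
    using assms(4) by (simp add: transpose_def)
qed

lemma same_cycle_graph_transpose_comp:
  assumes "inj w" "inj v" "same_cycle_graph w v"
    and "w k = i" "w i = j" "v k = i" "v i = j" "k \<noteq> i"
  shows "same_cycle_graph (transpose i j \<circ> w) (transpose i j \<circ> v)"
  by (rule same_cycle_graph_modify_common[OF assms(3)])
    (simp add: transpose_apply_cycle[OF assms(1,4,5,8)] transpose_apply_cycle[OF assms(2,6,7,8)]
      assms(4-7))

lemma card_support_transpose_comp_less: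
  assumes "finite S" "w permutes S" "w i \<noteq> i"
  shows "card {x. (transpose i (w i) \<circ> w) x \<noteq> x} < card {x. w x \<noteq> x}"
proof -
  define k where "k = inv w i"
  define u where "u = transpose i (w i) \<circ> w"
  have wk: "w k = i"
    unfolding k_def using assms(2) by (rule permutes_inverses(1))
  have ki: "k \<noteq> i"
    using wk assms(3) by auto
  have u: "u x = (if x = k then w i else if x = i then i else w x)" for x
    unfolding u_def using transpose_apply_cycle[OF permutes_inj[OF assms(2)] wk refl ki] by simp
  have "{x. u x \<noteq> x} \<subset> {x. w x \<noteq> x}"
  proof -
    have "{x. u x \<noteq> x} \<subseteq> {x. w x \<noteq> x}"
      using wk ki by (auto simp: u)
    moreover have "i \<notin> {x. u x \<noteq> x}" "i \<in> {x. w x \<noteq> x}"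
      using assms(3) ki by (simp_all add: u)
    ultimately show ?thesis
      by blast
  qed
  moreover have "finite {x. w x \<noteq> x}"
    using assms(1) permutes_not_in[OF assms(2)] by (auto intro: finite_subset)
  ultimately show ?thesis
    unfolding u_def by (rule psubset_card_mono[rotated])
qed

lemma same_cycle_graph_orientation:
  assumes "bij v" "same_cycle_graph w v" "w i \<noteq> i"
  shows "v i = w i \<or> inv v i = w i"
proof -
  have "perm_edge_mult w i (w i) = perm_edge_mult v i (w i)"
    using assms(2,3) unfolding same_cycle_graph_def by auto
  then have "v i = w i \<or> v (w i) = i"
    unfolding perm_edge_mult_def by (simp add: of_bool_def split: if_splits)
  then show ?thesis
    using bij_inv_eq_iff[OF assms(1), of "w i" i] by auto
qed

lemma same_cycle_graph_predecessor:
  assumes "same_cycle_graph w v" "w k = i" "v i = w i" "k \<noteq> i"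
  shows "v k = i"
proof -
  have "perm_edge_mult w i k = perm_edge_mult v i k"
    using assms(1,4) unfolding same_cycle_graph_def by auto
  then show ?thesis
    using assms(2,3) unfolding perm_edge_mult_def by (simp add: of_bool_def split: if_splits)
qed

lemma same_cycle_graph_cut:
  assumes "w permutes S" "v permutes S" "same_cycle_graph w v" "w i \<noteq> i" "v i = w i"
  shows "same_cycle_graph (transpose i (w i) \<circ> w) (transpose i (w i) \<circ> v)"
proof -
  define k where "k = inv w i"
  have wk: "w k = i"
    unfolding k_def using assms(1) by (rule permutes_inverses(1))
  have "k \<noteq> i"
    using wk assms(4) by auto
  moreover have "v k = i"
    using assms(3) wk assms(5) \<open>k \<noteq> i\<close> by (rule same_cycle_graph_predecessor)
  ultimately show ?thesis
    using permutes_inj[OF assms(1)] permutes_inj[OF assms(2)] assms(3) wk assms(5)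
    by (intro same_cycle_graph_transpose_comp) auto
qed

text \<open>After replacing \<open>v\<close> by its inverse if necessary, \<open>v\<close> runs
  through the cycle of a moved point \<open>i\<close> in the same direction as \<open>w\<close>; cutting \<open>i\<close> out of that
  cycle in both permutations preserves the cycle graph and flips both signs.\<close>

lemma sign_eq_if_same_cycle_graph:
  assumes "finite S" "w permutes S" "v permutes S" "same_cycle_graph w v"
  shows "sign w = sign v"
  using assms(2-4)
proof (induction "card {x. w x \<noteq> x}" arbitrary: w v rule: less_induct)
  case less
  show ?case
  proof (cases "w = id")
    case True
    moreover have "v = id"
      using less.prems(3) unfolding True by (rule same_cycle_graph_id)
    ultimately show ?thesis by simp
  next
    case False
    then obtain i where wi: "w i \<noteq> i" by (auto simp: fun_eq_iff)
    define \<tau> where "\<tau> = transpose i (w i)"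
    have "i \<in> S" "w i \<in> S"
      using permutes_not_in[OF less.prems(1)] wi less.prems(1) by (auto simp: permutes_in_image)
    then have \<tau>: "\<tau> permutes S" "sign \<tau> = -1"
      unfolding \<tau>_def using wi by (simp_all add: permutes_swap_id sign_swap_id)
    have smaller: "card {x. (\<tau> \<circ> w) x \<noteq> x} < card {x. w x \<noteq> x}"
      unfolding \<tau>_def using assms(1) less.prems(1) wi by (rule card_support_transpose_comp_less)
    have reduce: "sign w = sign v'"
      if v': "v' permutes S" "same_cycle_graph w v'" "v' i = w i" for v'
    proof -
      have "same_cycle_graph (\<tau> \<circ> w) (\<tau> \<circ> v')"
        unfolding \<tau>_def using less.prems(1) v'(1,2) wi v'(3) by (rule same_cycle_graph_cut)
      moreover have "\<tau> \<circ> w permutes S" "\<tau> \<circ> v' permutes S"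
        using \<tau>(1) less.prems(1) v'(1) by (auto intro: permutes_compose)
      ultimately have "sign (\<tau> \<circ> w) = sign (\<tau> \<circ> v')"
        using less.hyps[OF smaller] by blast
      moreover have "permutation \<tau>" "permutation w" "permutation v'"
        using assms(1) \<tau>(1) less.prems(1) v'(1) permutation_permutes by blast+
      ultimately show ?thesis
        using \<tau>(2) by (simp add: sign_compose)
    qed
    from same_cycle_graph_orientation[OF permutes_bij[OF less.prems(2)] less.prems(3) wi]
    show ?thesis
    proof
      assume "v i = w i"
      then show ?thesis by (rule reduce[OF less.prems(2,3)])
    next
      assume "inv v i = w i"
      moreover have "same_cycle_graph w (inv v)"
        using permutes_bij[OF less.prems(2)] less.prems(3) by (rule same_cycle_graph_inv)
      ultimately have "sign w = sign (inv v)"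
        using reduce permutes_inv[OF less.prems(2)] by blast
      also have "\<dots> = sign v"
        using assms(1) less.prems(2) permutation_permutes sign_inverse by blast
      finally show ?thesis .
    qed
  qed
qed

lemma prod_sum_single:
  fixes mon :: "'i \<Rightarrow> 't \<Rightarrow> 'm::comm_monoid_add" and c :: "'i \<Rightarrow> 't \<Rightarrow> 'b::comm_semiring_1"
  assumes "finite A" "\<And>i. i \<in> A \<Longrightarrow> finite (B i)"
  shows "(\<Prod>i\<in>A. \<Sum>t\<in>B i. Poly_Mapping.single (mon i t) (c i t)) =
    (\<Sum>f\<in>PiE A B. Poly_Mapping.single (\<Sum>i\<in>A. mon i (f i)) (\<Prod>i\<in>A. c i (f i)))"
proof -
  have "(\<Prod>i\<in>A. Poly_Mapping.single (mon i (f i)) (c i (f i))) =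
      Poly_Mapping.single (\<Sum>i\<in>A. mon i (f i)) (\<Prod>i\<in>A. c i (f i))" for f
    by (induction A rule: infinite_finite_induct) (simp_all add: mult_single)
  then show ?thesis
    using assms by (simp add: prod_sum_PiE)
qed

lemma keys_sum_single_subset:
  fixes mon :: "'x \<Rightarrow> 'm" and c :: "'x \<Rightarrow> 'b::{idom, ring_char_0}"
  assumes "finite X" "Y \<subseteq> X"
    and coherent: "\<And>x y. x \<in> X \<Longrightarrow> y \<in> X \<Longrightarrow> mon x = mon y \<Longrightarrow> c x = c y"
  shows "Poly_Mapping.keys (\<Sum>x\<in>Y. Poly_Mapping.single (mon x) (c x)) \<subseteq>
    Poly_Mapping.keys (\<Sum>x\<in>X. Poly_Mapping.single (mon x) (c x))"
proof
  fix \<mu>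
  have lookup: "Poly_Mapping.lookup (\<Sum>x\<in>Z. Poly_Mapping.single (mon x) (c x)) \<mu> =
      (\<Sum>x\<in>Z. if mon x = \<mu> then c x else 0)" for Z
    unfolding lookup_sum lookup_single when_def by (rule sum.cong) auto
  assume "\<mu> \<in> Poly_Mapping.keys (\<Sum>x\<in>Y. Poly_Mapping.single (mon x) (c x))"
  then have "(\<Sum>x\<in>Y. if mon x = \<mu> then c x else 0) \<noteq> 0"
    unfolding in_keys_iff lookup .
  then obtain x0 where "x0 \<in> Y" "(if mon x0 = \<mu> then c x0 else 0) \<noteq> 0"
    by (rule sum.not_neutral_contains_not_neutral)
  then have x0: "x0 \<in> X" "mon x0 = \<mu>" "c x0 \<noteq> 0"
    using assms(2) by (auto split: if_splits)
  let ?Z = "{x \<in> X. mon x = \<mu>}"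
  have "(\<Sum>x\<in>X. if mon x = \<mu> then c x else 0) = (\<Sum>x\<in>?Z. c x)"
    using assms(1) by (rule sum.inter_filter[symmetric])
  also have "\<dots> = (\<Sum>x\<in>?Z. c x0)"
  proof (rule sum.cong[OF refl])
    fix x
    assume "x \<in> ?Z"
    then show "c x = c x0"
      using coherent[of x x0] x0 by simp
  qed
  also have "\<dots> = of_nat (card ?Z) * c x0"
    by simp
  also have "\<dots> \<noteq> 0"
    using assms(1) x0 by (auto simp: card_eq_0_iff)
  finally show "\<mu> \<in> Poly_Mapping.keys (\<Sum>x\<in>X. Poly_Mapping.single (mon x) (c x))"
    unfolding in_keys_iff lookup .
qed

lemma keys_of_int_sign_mult:
  "Poly_Mapping.keys (of_int (sign w) * p) = Poly_Mapping.keys (p :: 'm::comm_monoid_add \<Rightarrow>\<^sub>0 int)"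
  by (cases rule: sign_cases[of w]) simp_all

lemma of_int_mult_single:
  "of_int k * Poly_Mapping.single m c = Poly_Mapping.single m (of_int k * (c :: 'b::comm_ring_1))"
  by (simp flip: single_of_int add: mult_single)

lemma cancellation_free_if_coefficients_coherent:
  fixes M :: "nat \<Rightarrow> nat \<Rightarrow> ('v \<Rightarrow>\<^sub>0 int) \<Rightarrow>\<^sub>0 int"
  assumes expansion: "\<And>w. w permutes {..<n} \<Longrightarrow>
      of_int (sign w) * perm_term M n w = (\<Sum>f\<in>F w. Poly_Mapping.single (mon w f) (c w f))"
    and finite: "\<And>w. finite (F w)"
    and coherent: "\<And>w f w' f'. w permutes {..<n} \<Longrightarrow> w' permutes {..<n} \<Longrightarrow>
      f \<in> F w \<Longrightarrow> f' \<in> F w' \<Longrightarrow> mon w f = mon w' f' \<Longrightarrow> c w f = c w' f'"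
  shows "cancellation_free M n"
  unfolding cancellation_free_def
proof (intro allI impI)
  fix w
  assume w: "w permutes {..<n}"
  define X where "X = Sigma {w. w permutes {..<n}} F"
  have "finite X"
    unfolding X_def using finite by (simp add: finite_permutations)
  have det: "det_leibniz M n = (\<Sum>x\<in>X. Poly_Mapping.single (mon (fst x) (snd x)) (c (fst x) (snd x)))"
    unfolding det_leibniz_def X_def using expansion finite
    by (simp add: sum.Sigma finite_permutations split_def)
  have "Poly_Mapping.keys (perm_term M n w) = Poly_Mapping.keys (of_int (sign w) * perm_term M n w)"
    by (rule keys_of_int_sign_mult[symmetric])
  also have "\<dots> = Poly_Mapping.keys
      (\<Sum>x\<in>Pair w ` F w. Poly_Mapping.single (mon (fst x) (snd x)) (c (fst x) (snd x)))"
    unfolding expansion[OF w] by (simp add: sum.reindex inj_on_def)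
  also have "\<dots> \<subseteq> Poly_Mapping.keys (det_leibniz M n)"
    unfolding det using \<open>finite X\<close>
  proof (rule keys_sum_single_subset)
    show "Pair w ` F w \<subseteq> X"
      unfolding X_def using w by auto
    show "c (fst x) (snd x) = c (fst y) (snd y)"
      if "x \<in> X" "y \<in> X" "mon (fst x) (snd x) = mon (fst y) (snd y)" for x y
      using that unfolding X_def by (auto intro: coherent)
  qed
  finally show "Poly_Mapping.keys (perm_term M n w) \<subseteq> Poly_Mapping.keys (det_leibniz M n)" .
qed

definition weighted_degree :: "('v \<Rightarrow> int) \<Rightarrow> ('v \<Rightarrow>\<^sub>0 int) \<Rightarrow> int" where
  "weighted_degree g \<mu> = (\<Sum>v\<in>Poly_Mapping.keys \<mu>. g v * Poly_Mapping.lookup \<mu> v)"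

lemma weighted_degree_superset:
  assumes "finite K" "Poly_Mapping.keys \<mu> \<subseteq> K"
  shows "weighted_degree g \<mu> = (\<Sum>v\<in>K. g v * Poly_Mapping.lookup \<mu> v)"
  unfolding weighted_degree_def
  by (rule sum.mono_neutral_left[OF assms]) (simp add: in_keys_iff)

lemma weighted_degree_add: "weighted_degree g (\<mu> + \<nu>) = weighted_degree g \<mu> + weighted_degree g \<nu>"
proof -
  let ?K = "Poly_Mapping.keys \<mu> \<union> Poly_Mapping.keys \<nu>"
  have "Poly_Mapping.keys (\<mu> + \<nu>) \<subseteq> ?K"
    by (rule keys_add)
  then show ?thesis
    by (simp add: weighted_degree_superset[of ?K] lookup_add distrib_left sum.distrib)
qed

lemma weighted_degree_sum: "weighted_degree g (\<Sum>a\<in>A. \<mu> a) = (\<Sum>a\<in>A. weighted_degree g (\<mu> a))"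
  by (induction A rule: infinite_finite_induct) (simp_all add: weighted_degree_add weighted_degree_def[of _ 0])

lemma weighted_degree_single: "weighted_degree g (Poly_Mapping.single v k) = g v * k"
  by (simp add: weighted_degree_superset[of "{v}"])

text \<open>The summands \<open>\<lambda>\<close>, \<open>-V(i)\<close> and \<open>e z\<^sup>\<alpha>\<close> of the entry \<open>(i, j)\<close> of \<open>\<lambda>I - H\<close>, one
  \<open>Edge_term \<alpha>\<close> for each neighbour \<open>(\<alpha>, j)\<close> of \<open>(0, i)\<close>.\<close>

datatype 'd entry_term = Lambda_term | Potential_term | Edge_term "'d \<Rightarrow> int"

definition entry_terms ::
    "(('d::finite \<Rightarrow> int) \<times> nat \<Rightarrow> ('d \<Rightarrow> int) \<times> nat \<Rightarrow> bool) \<Rightarrow> nat \<Rightarrow> nat \<Rightarrow> 'd entry_term set" where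
  "entry_terms adj i j =
     (if i = j then {Lambda_term, Potential_term} else {}) \<union> Edge_term ` {\<alpha>. adj (\<lambda>_. 0, i) (\<alpha>, j)}"

definition z_exponent :: "('d::finite \<Rightarrow> int) \<Rightarrow> 'd var \<Rightarrow>\<^sub>0 int" where
  "z_exponent \<alpha> = (\<Sum>k\<in>UNIV. Poly_Mapping.single (Zv k) (\<alpha> k))"

fun term_monomial :: "nat \<Rightarrow> nat \<Rightarrow> 'd::finite entry_term \<Rightarrow> 'd var \<Rightarrow>\<^sub>0 int" where
  "term_monomial i j Lambda_term = Poly_Mapping.single Lam 1"
| "term_monomial i j Potential_term = Poly_Mapping.single (Vv i) 1"
| "term_monomial i j (Edge_term \<alpha>) = Poly_Mapping.single (edge_var i j \<alpha>) 1 + z_exponent \<alpha>"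

definition term_coeff :: "'d entry_term \<Rightarrow> int" where
  "term_coeff t = (if t = Potential_term then -1 else 1)"

lemma finite_entry_terms:
  "finite {\<alpha>. adj (\<lambda>_. 0, i) (\<alpha>, j)} \<Longrightarrow> finite (entry_terms adj i j)"
  by (simp add: entry_terms_def)

lemma dispersion_matrix_eq_sum_entry_terms:
  assumes "finite {\<alpha>. adj (\<lambda>_. 0, i) (\<alpha>, j)}"
  shows "dispersion_matrix adj i j =
    (\<Sum>t\<in>entry_terms adj i j. Poly_Mapping.single (term_monomial i j t) (term_coeff t))"
proof -
  let ?A = "{\<alpha>. adj (\<lambda>_. 0, i) (\<alpha>, j)}"
  let ?term = "\<lambda>t. Poly_Mapping.single (term_monomial i j t) (term_coeff t)"
  have edges: "(\<Sum>t\<in>Edge_term ` ?A. ?term t) = (\<Sum>\<alpha>\<in>?A. pvar (edge_var i j \<alpha>) * zpow \<alpha>)"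
    by (subst sum.reindex) (auto simp: inj_on_def pvar_def zpow_def z_exponent_def term_coeff_def mult_single)
  show ?thesis
  proof (cases "i = j")
    case True
    have "{Lambda_term, Potential_term} \<inter> Edge_term ` ?A = {}" by auto
    then have "(\<Sum>t\<in>entry_terms adj i j. ?term t) =
        (\<Sum>t\<in>{Lambda_term, Potential_term}. ?term t) + (\<Sum>t\<in>Edge_term ` ?A. ?term t)"
      using True assms unfolding entry_terms_def by (simp add: sum.union_disjoint)
    also have "\<dots> = pvar Lam - pvar (Vv i) + (\<Sum>\<alpha>\<in>?A. pvar (edge_var i j \<alpha>) * zpow \<alpha>)"
      unfolding edges by (simp add: pvar_def term_coeff_def single_uminus)
    finally show ?thesis
      using True by (simp add: dispersion_matrix_def floquet_H_def)
  next
    case False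
    then show ?thesis
      by (simp add: dispersion_matrix_def floquet_H_def entry_terms_def edges)
  qed
qed

definition term_choices ::
    "(('d::finite \<Rightarrow> int) \<times> nat \<Rightarrow> ('d \<Rightarrow> int) \<times> nat \<Rightarrow> bool) \<Rightarrow> nat \<Rightarrow> (nat \<Rightarrow> nat) \<Rightarrow>
      (nat \<Rightarrow> 'd entry_term) set" where
  "term_choices adj n w = PiE {..<n} (\<lambda>i. entry_terms adj i (w i))"

definition choice_monomial :: "nat \<Rightarrow> (nat \<Rightarrow> nat) \<Rightarrow> (nat \<Rightarrow> 'd::finite entry_term) \<Rightarrow> 'd var \<Rightarrow>\<^sub>0 int" where
  "choice_monomial n w f = (\<Sum>i<n. term_monomial i (w i) (f i))"

definition choice_coeff :: "nat \<Rightarrow> (nat \<Rightarrow> 'd entry_term) \<Rightarrow> int" where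
  "choice_coeff n f = (\<Prod>i<n. term_coeff (f i))"

lemma finite_term_choices:
  "(\<And>i j. finite {\<alpha>. adj (\<lambda>_. 0, i) (\<alpha>, j)}) \<Longrightarrow> finite (term_choices adj n w)"
  by (simp add: term_choices_def finite_PiE finite_entry_terms)

lemma signed_perm_term_dispersion_matrix:
  assumes "\<And>i j. finite {\<alpha>. adj (\<lambda>_. 0, i) (\<alpha>, j)}"
  shows "of_int (sign w) * perm_term (dispersion_matrix adj) n w =
    (\<Sum>f\<in>term_choices adj n w.
      Poly_Mapping.single (choice_monomial n w f) (sign w * choice_coeff n f))"
proof -
  have "perm_term (dispersion_matrix adj) n w =
      (\<Sum>f\<in>term_choices adj n w. Poly_Mapping.single (choice_monomial n w f) (choice_coeff n f))"
    unfolding perm_term_def term_choices_def choice_monomial_def choice_coeff_def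
      dispersion_matrix_eq_sum_entry_terms[of adj, OF assms]
    by (rule prod_sum_single) (simp_all add: assms finite_entry_terms)
  then show ?thesis
    by (simp add: sum_distrib_left of_int_mult_single)
qed

lemma lookup_choice_monomial_Vv:
  assumes "p < n"
  shows "Poly_Mapping.lookup (choice_monomial n w f) (Vv p) = of_bool (f p = Potential_term)"
proof -
  have "Poly_Mapping.lookup (term_monomial i j t) (Vv p) = of_bool (t = Potential_term \<and> i = p)"
    for i j and t :: "'a entry_term"
    by (cases t) (simp_all add: lookup_add lookup_single when_def z_exponent_def lookup_sum edge_var_def)
  then have "Poly_Mapping.lookup (choice_monomial n w f) (Vv p) =
      (\<Sum>i<n. if i = p then of_bool (f p = Potential_term) else 0)"
    unfolding choice_monomial_def lookup_sum by (intro sum.cong) auto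
  with assms show ?thesis
    by simp
qed

lemma choice_coeff_eq:
  "choice_coeff n f =
    (\<Prod>p<n. if Poly_Mapping.lookup (choice_monomial n w f) (Vv p) = 1 then -1 else 1)"
  unfolding choice_coeff_def term_coeff_def by (intro prod.cong) (simp_all add: lookup_choice_monomial_Vv)

text \<open>In the encoding of edge orbits, \<open>fst ` E\<close> is the set of endpoints in \<open>W\<close> of the orbit \<open>E\<close>.\<close>

definition edge_orbit_weight :: "nat \<Rightarrow> nat \<Rightarrow> 'd var \<Rightarrow> int" where
  "edge_orbit_weight x y v = (case v of Ev E \<Rightarrow> of_bool (fst ` E = {x, y}) | _ \<Rightarrow> 0)"

lemma weighted_degree_term_monomial:
  assumes "x \<noteq> y" "t \<in> entry_terms adj i j"
  shows "weighted_degree (edge_orbit_weight x y) (term_monomial i j t) = of_bool ({i, j} = {x, y})"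
proof -
  have "weighted_degree (edge_orbit_weight x y) (z_exponent \<alpha>) = 0" for \<alpha>
    by (simp add: z_exponent_def weighted_degree_sum weighted_degree_single edge_orbit_weight_def)
  moreover have "fst ` {(i, j, \<alpha>), (j, i, \<beta>)} = {i, j}" for \<alpha> \<beta> :: "'a \<Rightarrow> int"
    by auto
  ultimately show ?thesis
    using assms by (cases t)
      (auto simp: entry_terms_def weighted_degree_add weighted_degree_single edge_orbit_weight_def
        edge_var_def doubleton_eq_iff)
qed

lemma weighted_degree_choice_monomial:
  assumes "x \<noteq> y" "w permutes {..<n}" "f \<in> term_choices adj n w"
  shows "weighted_degree (edge_orbit_weight x y) (choice_monomial n w f) = perm_edge_mult w x y"
proof -
  have arc: "(\<Sum>i<n. of_bool (i = a \<and> w a = b)) = (of_bool (w a = b) :: int)" if "a \<noteq> b" for a b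
  proof -
    have "(\<Sum>i<n. of_bool (i = a \<and> w a = b)) = (\<Sum>i<n. if i = a then of_bool (w a = b) else 0 :: int)"
      by (intro sum.cong) auto
    also have "\<dots> = of_bool (w a = b)"
      using permutes_not_in[OF assms(2), of a] that by auto
    finally show ?thesis .
  qed
  have "weighted_degree (edge_orbit_weight x y) (choice_monomial n w f) =
      (\<Sum>i<n. of_bool ({i, w i} = {x, y}))"
    unfolding choice_monomial_def weighted_degree_sum
  proof (rule sum.cong[OF refl])
    fix i
    assume "i \<in> {..<n}"
    then have "f i \<in> entry_terms adj i (w i)"
      using assms(3) by (auto simp: term_choices_def)
    then show "weighted_degree (edge_orbit_weight x y) (term_monomial i (w i) (f i)) =
        of_bool ({i, w i} = {x, y})"
      by (rule weighted_degree_term_monomial[OF assms(1)])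
  qed
  also have "\<dots> = (\<Sum>i<n. of_bool (i = x \<and> w x = y) + of_bool (i = y \<and> w y = x))"
    using assms(1) by (intro sum.cong) (auto simp: doubleton_eq_iff)
  also have "\<dots> = perm_edge_mult w x y"
    by (simp only: sum.distrib arc[OF assms(1)] arc[OF assms(1)[symmetric]] perm_edge_mult_def)
  finally show ?thesis .
qed

lemma signed_choice_coeff_determined_by_monomial:
  assumes "w permutes {..<n}" "w' permutes {..<n}"
    and "f \<in> term_choices adj n w" "f' \<in> term_choices adj n w'"
    and same_monomial: "choice_monomial n w f = choice_monomial n w' f'"
  shows "sign w * choice_coeff n f = sign w' * choice_coeff n f'"
proof -
  have "choice_coeff n f = choice_coeff n f'"
    using choice_coeff_eq[of n f w] choice_coeff_eq[of n f' w'] same_monomial by simp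
  moreover have "same_cycle_graph w w'"
    unfolding same_cycle_graph_def
  proof (intro allI impI)
    fix x y :: nat
    assume "x \<noteq> y"
    then show "perm_edge_mult w x y = perm_edge_mult w' x y"
      using weighted_degree_choice_monomial[OF \<open>x \<noteq> y\<close> assms(1,3)]
        weighted_degree_choice_monomial[OF \<open>x \<noteq> y\<close> assms(2,4)] same_monomial
      by simp
  qed
  then have "sign w = sign w'"
    using sign_eq_if_same_cycle_graph[OF finite_lessThan assms(1,2)] by blast
  ultimately show ?thesis
    by simp
qed

theorem proposition2p1:
  fixes n :: nat
    and adj :: "('d::finite \<Rightarrow> int) \<times> nat \<Rightarrow> ('d \<Rightarrow> int) \<times> nat \<Rightarrow> bool"
  assumes "periodic_graph n adj"
  shows "cancellation_free (dispersion_matrix adj) n"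
proof (rule cancellation_free_if_coefficients_coherent)
  have fin: "\<And>i j. finite {\<alpha>. adj (\<lambda>_. 0, i) (\<alpha>, j)}"
    using assms unfolding periodic_graph_def by blast
  show "of_int (sign w) * perm_term (dispersion_matrix adj) n w =
      (\<Sum>f\<in>term_choices adj n w. Poly_Mapping.single (choice_monomial n w f) (sign w * choice_coeff n f))"
    for w
    using fin by (rule signed_perm_term_dispersion_matrix)
  show "finite (term_choices adj n w)" for w
    using fin by (rule finite_term_choices)
  show "sign w * choice_coeff n f = sign w' * choice_coeff n f'"
    if "w permutes {..<n}" "w' permutes {..<n}" "f \<in> term_choices adj n w" "f' \<in> term_choices adj n w'"
      "choice_monomial n w f = choice_monomial n w' f'" for w w' f f'
    using that by (rule signed_choice_coeff_determined_by_monomial)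
qed

end
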